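(* Let $G$ be a simple graph with canonical mixed graph $F$ and let $Y$ be as defined in the context. Let $u,w\in V(G)$ and $v\in Y$ be such that $\overrightarrow{uv}$ and $\overrightarrow{vw}$ are arcs of $F$ and $uw\notin E(G)$. Then $cM_2(G-uv-vw+uw)>cM_2(G)$.
   Context: All graphs are finite and simple; $d_G(u)$ is the degree of $u$ and $cM_2(G)=\sum_{uv\in E(G)}|d_G(u)^2-d_G(v)^2|$. $G-uv-vw+uw$ denotes $G$ with edges $uv,vw$ deleted and edge $uw$ added. The canonical mixed graph $F$ of $G$ has vertex set $V(G)$; for each edge $uv\in E(G)$: if $d_G(u)>d_G(v)$ then $F$ contains the arc $\overrightarrow{uv}$, and if $d_G(u)=d_G(v)$ then $F$ contains the undirected edge $uv$. $d^+_F(u)$ (resp. $d^-_F(u)$) is the number of arcs of $F$ with tail (resp. head) $u$. $Y=\{u\in V(G): d^+_F(u)< d^-_F(u)\}$. *)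

theory Defs
  imports Main
begin

definition simple_graph :: "'a set \<Rightarrow> 'a set set \<Rightarrow> bool" where
  "simple_graph V E \<longleftrightarrow> finite V \<and> (\<forall>e\<in>E. \<exists>x y. x \<in> V \<and> y \<in> V \<and> x \<noteq> y \<and> e = {x, y})"

definition deg :: "'a set set \<Rightarrow> 'a \<Rightarrow> nat" where
  "deg E u = card {v. {u, v} \<in> E}"

text \<open>cM_2(G) = sum over edges uv of |d(u)^2 - d(v)^2|; for an edge e = {u,v} this is
  the maximum minus the minimum of the squared degrees of its endpoints.\<close>
definition cM2 :: "'a set set \<Rightarrow> int" where
  "cM2 E = (\<Sum>e\<in>E. Max ((\<lambda>x. int (deg E x) ^ 2) ` e) - Min ((\<lambda>x. int (deg E x) ^ 2) ` e))"

definition arc :: "'a set set \<Rightarrow> 'a \<Rightarrow> 'a \<Rightarrow> bool" where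
  "arc E u v \<longleftrightarrow> {u, v} \<in> E \<and> deg E u > deg E v"

definition outdeg :: "'a set set \<Rightarrow> 'a \<Rightarrow> nat" where
  "outdeg E u = card {v. arc E u v}"

definition indeg :: "'a set set \<Rightarrow> 'a \<Rightarrow> nat" where
  "indeg E u = card {v. arc E v u}"

definition Yset :: "'a set \<Rightarrow> 'a set set \<Rightarrow> 'a set" where
  "Yset V E = {u \<in> V. outdeg E u < indeg E u}"

definition move_edges :: "'a set set \<Rightarrow> 'a \<Rightarrow> 'a \<Rightarrow> 'a \<Rightarrow> 'a set set" where
  "move_edges E u v w = (E - {{u, v}, {v, w}}) \<union> {{u, w}}"

end

theory Submission
  imports Defs
begin

text \<open>Replacing the path u \<rightarrow> v \<rightarrow> w of arcs by the edge uw lowers only the degree of v, by 2.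
  The new edge uw carries exactly the weight of uv and vw together, and edges avoiding v keep
  their weight. On each remaining edge vx the weight changes by at least 4 d(v) - 4 in favour
  of the new graph when x is an in-neighbour of v and by at most that much against it when x is
  an out-neighbour. As v has more in- than out-neighbours, the net change is positive.\<close>

definition edge_weight :: "'a set set \<Rightarrow> 'a set \<Rightarrow> int" where
  "edge_weight E e = Max ((\<lambda>x. int (deg E x) ^ 2) ` e) - Min ((\<lambda>x. int (deg E x) ^ 2) ` e)"

lemma cM2_eq_sum_edge_weight: "cM2 E = (\<Sum>e\<in>E. edge_weight E e)"
  unfolding cM2_def edge_weight_def ..

lemma edge_weight_doubleton:
  "edge_weight E {a, b} = \<bar>int (deg E a) ^ 2 - int (deg E b) ^ 2\<bar>"
  by (simp add: edge_weight_def max_def min_def)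

lemma abs_square_diff_shift_ge:
  fixes d x :: int
  assumes "d \<ge> 2" "x \<ge> 0"
  shows "\<bar>(d - 2)^2 - x^2\<bar> - \<bar>d^2 - x^2\<bar> \<ge> (4*d - 4) * (of_bool (x > d) - of_bool (x < d))"
proof -
  consider "x > d" | "x < d" | "x = d" by linarith
  then show ?thesis
  proof cases
    case 1
    have "x^2 > d^2" using 1 assms by (simp add: power_strict_mono)
    moreover have "d^2 \<ge> (d - 2)^2" using assms by (simp add: power_mono)
    ultimately show ?thesis using 1 by (simp add: power2_eq_square algebra_simps)
  next
    case 2
    have "x^2 \<le> d^2" using 2 assms by (simp add: power_mono)
    moreover have "\<bar>(d - 2)^2 - x^2\<bar> \<ge> (d - 2)^2 - x^2" by simp
    ultimately show ?thesis using 2 by (simp add: power2_eq_square algebra_simps)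
  qed simp
qed

lemma simple_graph_edge_through:
  assumes "simple_graph V E" "e \<in> E" "v \<in> e"
  obtains x where "x \<noteq> v" "e = {v, x}"
proof -
  obtain a b where ab: "a \<noteq> b" "e = {a, b}"
    using assms(1,2) unfolding simple_graph_def by blast
  consider "v = a" | "v = b" using assms(3) ab(2) by blast
  then show thesis
  proof cases
    case 1
    then show thesis using that[of b] ab by simp
  next
    case 2
    then show thesis using that[of a] ab by (simp add: insert_commute)
  qed
qed

lemma simple_graph_no_loop:
  assumes "simple_graph V E"
  shows "{x, x} \<notin> E"
proof
  assume "{x, x} \<in> E"
  then obtain y where "y \<noteq> x" "{x, x} = {x, y}"
    by (rule simple_graph_edge_through[OF assms]) simp
  then show False by (simp add: doubleton_eq_iff)
qed

lemma simple_graph_finite_edges: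
  assumes "simple_graph V E"
  shows "finite E"
proof (rule finite_subset)
  show "E \<subseteq> Pow V" using assms unfolding simple_graph_def by fastforce
  show "finite (Pow V)" using assms unfolding simple_graph_def by simp
qed

lemma simple_graph_finite_neighbours:
  assumes "simple_graph V E"
  shows "finite {y. {x, y} \<in> E}"
proof (rule finite_subset)
  show "{y. {x, y} \<in> E} \<subseteq> V"
    using assms unfolding simple_graph_def by (auto simp: doubleton_eq_iff)
  show "finite V" using assms unfolding simple_graph_def by simp
qed

lemma sum_edges_through_vertex:
  assumes "simple_graph V E" "F \<subseteq> E" "\<And>e. e \<in> F \<Longrightarrow> v \<notin> e \<Longrightarrow> f e = 0"
  shows "(\<Sum>e\<in>F. f e) = (\<Sum>x\<in>{x. {v, x} \<in> F}. f {v, x})"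
proof -
  have finF: "finite F" using simple_graph_finite_edges[OF assms(1)] assms(2) finite_subset by blast
  have star: "{e \<in> F. v \<in> e} = (\<lambda>x. {v, x}) ` {x. {v, x} \<in> F}"
    using simple_graph_edge_through[OF assms(1)] assms(2) by blast
  have "(\<Sum>e\<in>F. f e) = (\<Sum>e\<in>{e \<in> F. v \<in> e}. f e)"
    using finF assms(3) by (intro sum.mono_neutral_right) auto
  also have "\<dots> = (\<Sum>x\<in>{x. {v, x} \<in> F}. f {v, x})"
    unfolding star by (rule sum.reindex_cong[where l = "\<lambda>x. {v, x}"])
      (auto simp: inj_on_def doubleton_eq_iff)
  finally show ?thesis .
qed

lemma sum_arc_balance:
  assumes "finite {y. {v, y} \<in> E}"
  shows "(\<Sum>x\<in>{y. {v, y} \<in> E}. of_bool (arc E x v) - of_bool (arc E v x) :: int)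
    = int (indeg E v) - int (outdeg E v)"
proof -
  have "{y. {v, y} \<in> E} \<inter> {x. arc E x v} = {x. arc E x v}"
    "{y. {v, y} \<in> E} \<inter> {x. arc E v x} = {x. arc E v x}"
    unfolding arc_def by (auto simp: insert_commute)
  then show ?thesis
    using assms by (simp add: sum_subtractf indeg_def outdeg_def)
qed

locale arc_shortcut =
  fixes V :: "'a set" and E :: "'a set set" and u v w :: 'a
  assumes simple: "simple_graph V E"
    and arc_uv: "arc E u v" and arc_vw: "arc E v w"
    and uw_non_edge: "{u, w} \<notin> E"
begin

abbreviation E' :: "'a set set" where
  "E' \<equiv> move_edges E u v w"

abbreviation N :: "'a \<Rightarrow> 'a set" where
  "N x \<equiv> {y. {x, y} \<in> E}"

lemma uv_edge: "{u, v} \<in> E" and vw_edge: "{v, w} \<in> E"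
  using arc_uv arc_vw unfolding arc_def by auto

lemma endpoints_neighbours: "{u, w} \<subseteq> N v"
  using uv_edge vw_edge by (auto simp: insert_commute)

lemma distinct: "u \<noteq> v" "v \<noteq> w" "u \<noteq> w"
  using arc_uv arc_vw unfolding arc_def by auto

lemma finite_N: "finite (N x)"
  using simple_graph_finite_neighbours[OF simple] .

lemma neighbours_E': "{y. {x, y} \<in> E'} =
    (if x = u then insert w (N u - {v}) else if x = w then insert u (N w - {v})
     else if x = v then N v - {u, w} else N x)"
  using distinct unfolding move_edges_def by (auto simp: doubleton_eq_iff)

lemma deg_E'_other:
  assumes "x \<noteq> v"
  shows "deg E' x = deg E x"
proof -
  have "v \<in> N u" "w \<notin> N u" "v \<in> N w" "u \<notin> N w"
    using uv_edge vw_edge uw_non_edge by (auto simp: insert_commute)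
  moreover have "card (N u) > 0" "card (N w) > 0"
    using calculation finite_N card_gt_0_iff by blast+
  ultimately show ?thesis
    using neighbours_E'[of x] assms distinct finite_N
    by (auto simp: deg_def card_insert_if card_Diff_singleton)
qed

lemma deg_E'_centre: "deg E' v = deg E v - 2"
  using neighbours_E'[of v] endpoints_neighbours distinct finite_N
  by (simp add: deg_def card_Diff_subset)

lemma deg_centre_ge_two: "deg E v \<ge> 2"
proof -
  have "card {u, w} \<le> deg E v"
    unfolding deg_def using endpoints_neighbours finite_N card_mono by blast
  then show ?thesis using distinct by simp
qed

lemma edge_weight_E'_avoiding: "v \<notin> e \<Longrightarrow> edge_weight E' e = edge_weight E e"
proof -
  assume "v \<notin> e"
  then have "(\<lambda>x. int (deg E' x) ^ 2) ` e = (\<lambda>x. int (deg E x) ^ 2) ` e"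
    by (intro image_cong refl) (metis deg_E'_other)
  then show ?thesis unfolding edge_weight_def by simp
qed

lemma edge_weight_E'_shortcut:
  "edge_weight E' {u, w} = edge_weight E {u, v} + edge_weight E {v, w}"
proof -
  have "int (deg E w) ^ 2 \<le> int (deg E v) ^ 2" "int (deg E v) ^ 2 \<le> int (deg E u) ^ 2"
    using arc_uv arc_vw unfolding arc_def by (simp_all add: power_mono)
  then show ?thesis using distinct by (simp add: edge_weight_doubleton deg_E'_other)
qed

lemma edge_weight_E'_star_ge:
  assumes "{v, x} \<in> E"
  shows "edge_weight E' {v, x} - edge_weight E {v, x}
    \<ge> (4 * int (deg E v) - 4) * (of_bool (arc E x v) - of_bool (arc E v x))"
proof -
  have "x \<noteq> v" using assms simple_graph_no_loop[OF simple] by blast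
  moreover have "arc E x v \<longleftrightarrow> deg E x > deg E v" "arc E v x \<longleftrightarrow> deg E x < deg E v"
    using assms unfolding arc_def by (auto simp: insert_commute)
  ultimately show ?thesis
    using abs_square_diff_shift_ge[of "int (deg E v)" "int (deg E x)"] deg_centre_ge_two
    by (simp add: edge_weight_doubleton deg_E'_other deg_E'_centre)
qed

lemma remaining_edges_gain_ge:
  "(\<Sum>e\<in>E - {{u, v}, {v, w}}. edge_weight E' e - edge_weight E e)
    \<ge> (4 * int (deg E v) - 4) * (int (indeg E v) - int (outdeg E v))"
proof -
  define \<sigma> :: "'a \<Rightarrow> int" where "\<sigma> x = of_bool (arc E x v) - of_bool (arc E v x)" for x
  have remaining: "{x. {v, x} \<in> E - {{u, v}, {v, w}}} = N v - {u, w}"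
    using distinct by (auto simp: doubleton_eq_iff)
  have "(\<Sum>e\<in>E - {{u, v}, {v, w}}. edge_weight E' e - edge_weight E e)
      = (\<Sum>x\<in>N v - {u, w}. edge_weight E' {v, x} - edge_weight E {v, x})"
    unfolding remaining[symmetric]
    by (rule sum_edges_through_vertex[OF simple]) (auto simp: edge_weight_E'_avoiding)
  also have "\<dots> \<ge> (\<Sum>x\<in>N v - {u, w}. (4 * int (deg E v) - 4) * \<sigma> x)"
  proof (rule sum_mono)
    fix x assume "x \<in> N v - {u, w}"
    then have "{v, x} \<in> E" by simp
    then show "(4 * int (deg E v) - 4) * \<sigma> x \<le> edge_weight E' {v, x} - edge_weight E {v, x}"
      unfolding \<sigma>_def by (rule edge_weight_E'_star_ge)
  qed
  finally have star_ge: "(\<Sum>x\<in>N v - {u, w}. (4 * int (deg E v) - 4) * \<sigma> x)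
      \<le> (\<Sum>e\<in>E - {{u, v}, {v, w}}. edge_weight E' e - edge_weight E e)" .
  have "\<sigma> u + \<sigma> w = 0"
    using arc_uv arc_vw unfolding \<sigma>_def arc_def by auto
  then have "(\<Sum>x\<in>N v - {u, w}. \<sigma> x) = (\<Sum>x\<in>N v. \<sigma> x)"
    using endpoints_neighbours finite_N distinct by (simp add: sum_diff)
  also have "\<dots> = int (indeg E v) - int (outdeg E v)"
    unfolding \<sigma>_def by (rule sum_arc_balance[OF finite_N])
  finally show ?thesis
    using star_ge by (simp add: sum_distrib_left[symmetric])
qed

lemma cM2_E'_minus_cM2:
  "cM2 E' - cM2 E = (\<Sum>e\<in>E - {{u, v}, {v, w}}. edge_weight E' e - edge_weight E e)"
proof -
  define R where "R = E - {{u, v}, {v, w}}"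
  have "finite R"
    using simple_graph_finite_edges[OF simple] unfolding R_def by simp
  moreover have "E = insert {u, v} (insert {v, w} R)" "E' = insert {u, w} R"
    using uv_edge vw_edge unfolding R_def move_edges_def by auto
  moreover have "{u, v} \<notin> insert {v, w} R" "{v, w} \<notin> R" "{u, w} \<notin> R"
    using distinct uw_non_edge unfolding R_def by (auto simp: doubleton_eq_iff)
  ultimately have split_E: "(\<Sum>e\<in>E. f e) = (\<Sum>e\<in>R. f e) + f {u, v} + f {v, w}"
    and split_E': "(\<Sum>e\<in>E'. f e) = (\<Sum>e\<in>R. f e) + f {u, w}" for f :: "'a set \<Rightarrow> int"
    by simp_all
  show ?thesis
    using split_E[of "edge_weight E"] split_E'[of "edge_weight E'"] edge_weight_E'_shortcut
      sum_subtractf[of "edge_weight E'" "edge_weight E" R]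
    unfolding cM2_eq_sum_edge_weight R_def by linarith
qed

end

theorem mainTheorem4:
  fixes V :: "'a set" and E :: "'a set set" and u v w :: 'a
  assumes "simple_graph V E"
    and "u \<in> V" and "w \<in> V" and "v \<in> Yset V E"
    and "arc E u v" and "arc E v w"
    and "{u, w} \<notin> E"
  shows "cM2 (move_edges E u v w) > cM2 E"
proof -
  interpret arc_shortcut V E u v w
    using assms by unfold_locales
  have "outdeg E v < indeg E v" using assms(4) unfolding Yset_def by simp
  then have "0 < (4 * int (deg E v) - 4) * (int (indeg E v) - int (outdeg E v))"
    using deg_centre_ge_two by (intro mult_pos_pos) auto
  then show ?thesis using remaining_edges_gain_ge cM2_E'_minus_cM2 by linarith
qed

end
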